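(* Let $G$ be a group, let $A,B\subseteq G$ be nonempty finite sets, $N>0$ a real number and $\epsilon\in(0,1)$. (a) If $d=\operatorname{VC}^\ell_B(A)$ and $\epsilon\leq N/|BA|$, then $\operatorname{cov}(B:\operatorname{Stab}^\ell_N(A)\cap B^{-1}B)\leq(30/\epsilon)^d$. (b) If $d=\operatorname{VC}^r_B(A)$ and $\epsilon\leq N/|AB|$, then $\operatorname{cov}(B^{-1}:\operatorname{Stab}^r_N(A)\cap BB^{-1})\leq(30/\epsilon)^d$.
   Context: $AB=\{ab\}$, $A^{-1}=\{a^{-1}\}$. A set system $\mathcal F$ on $X$ shatters $Y\subseteq X$ if $\{Y\cap S:S\in\mathcal F\}$ is the power set of $Y$; $\operatorname{VC}(\mathcal F)$ is the maximum size of a finite shattered set. $\operatorname{VC}^\ell_B(A)=\operatorname{VC}(\{xA:x\in B\})$, $\operatorname{VC}^r_B(A)=\operatorname{VC}(\{Ax:x\in B\})$. $\operatorname{Stab}^\ell_N(A)=\{x\in G:|xA\triangle A|\le N\}$, $\operatorname{Stab}^r_N(A)=\{x\in G:|Ax\triangle A|\le N\}$. For nonempty $Y,C\subseteq G$ and real $K\ge1$, $\operatorname{cov}(Y:C)\leq K$ means $Y\subseteq FC$ for some $F\subseteq Y$ with $|F|\leq K$. *)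

theory Defs
  imports "HOL-Algebra.Algebra"
begin

definition shatters :: "'a set set \<Rightarrow> 'a set \<Rightarrow> bool" where
  "shatters F Y \<longleftrightarrow> (\<lambda>S. Y \<inter> S) ` F = Pow Y"

definition VC :: "'a set \<Rightarrow> 'a set set \<Rightarrow> nat" where
  "VC U S = Max (card ` {Y. Y \<subseteq> U \<and> finite Y \<and> shatters S Y})"

definition VC_left :: "('a, 'b) monoid_scheme \<Rightarrow> 'a set \<Rightarrow> 'a set \<Rightarrow> nat" where
  "VC_left G B A = VC (carrier G) (image (\<lambda>x. l_coset G x A) B)"

definition VC_right :: "('a, 'b) monoid_scheme \<Rightarrow> 'a set \<Rightarrow> 'a set \<Rightarrow> nat" where
  "VC_right G B A = VC (carrier G) (image (\<lambda>x. r_coset G A x) B)"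

definition Stab_left :: "('a, 'b) monoid_scheme \<Rightarrow> real \<Rightarrow> 'a set \<Rightarrow> 'a set" where
  "Stab_left G N A = {x \<in> carrier G. real (card ((x <#\<^bsub>G\<^esub> A) - A \<union> (A - (x <#\<^bsub>G\<^esub> A)))) \<le> N}"

definition Stab_right :: "('a, 'b) monoid_scheme \<Rightarrow> real \<Rightarrow> 'a set \<Rightarrow> 'a set" where
  "Stab_right G N A = {x \<in> carrier G. real (card ((A #>\<^bsub>G\<^esub> x) - A \<union> (A - (A #>\<^bsub>G\<^esub> x)))) \<le> N}"

definition cov_le :: "('a, 'b) monoid_scheme \<Rightarrow> 'a set \<Rightarrow> 'a set \<Rightarrow> real \<Rightarrow> bool" where
  "cov_le G Y C K \<longleftrightarrow> (\<exists>F. F \<subseteq> Y \<and> finite F \<and> real (card F) \<le> K \<and> Y \<subseteq> F <#>\<^bsub>G\<^esub> C)"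

end

theory Submission
  imports Defs
begin

text \<open>The translates \<open>b A\<close> (\<open>b \<in> B\<close>) form a set system of VC dimension \<open>d\<close> on the finite
  set \<open>B A\<close>. Take \<open>F \<subseteq> B\<close> maximal such that the translates \<open>x A\<close> (\<open>x \<in> F\<close>) have pairwise
  symmetric differences of size \<open>> N\<close>. By maximality each \<open>b \<in> B\<close> has some \<open>x \<in> F\<close> with
  \<open>|b A \<triangle> x A| \<le> N\<close>, and then \<open>b = x (x\<^sup>-\<^sup>1 b)\<close> where \<open>x\<^sup>-\<^sup>1 b \<in> B\<^sup>-\<^sup>1 B\<close> and
  \<open>|x\<^sup>-\<^sup>1 b A \<triangle> A| = |b A \<triangle> x A|\<close>, so \<open>x\<^sup>-\<^sup>1 b \<in> Stab\<^sup>l\<^sub>N(A)\<close>. As \<open>N \<ge> \<epsilon> |B A|\<close>, the translates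
  of \<open>F\<close> are \<open>\<epsilon> |B A|\<close>-separated, and Haussler's packing lemma bounds their number by
  \<open>2 \<Phi>\<^sub>d(\<lceil>4 d / \<epsilon>\<rceil>) \<le> (30 / \<epsilon>)\<^sup>d\<close>, where \<open>\<Phi>\<^sub>d(m)\<close> is the sum of \<open>m choose i\<close> over \<open>i \<le> d\<close>
  (\<open>sauer_bound d m\<close> below).
  Haussler's lemma rests on two facts: the one-inclusion graph of a family of VC dimension
  \<open>d\<close> has at most \<open>d\<close> times as many edges as vertices (proved by shifting, together with the
  Sauer--Shelah lemma), and averaging over the restrictions of the family to all \<open>s\<close>-subsets
  of the ground set, which relates the number of those edges to the separation.
  Right translates are handled symmetrically.\<close>

section \<open>Shattering and the one-inclusion graph\<close>

definition VC_at_most :: "'a set set \<Rightarrow> 'a set \<Rightarrow> nat \<Rightarrow> bool" where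
  "VC_at_most F U d \<longleftrightarrow> (\<forall>Y \<subseteq> U. shatters F Y \<longrightarrow> card Y \<le> d)"

definition trace :: "'a set set \<Rightarrow> 'a set \<Rightarrow> 'a set set" where
  "trace F S = (\<lambda>P. P \<inter> S) ` F"

text \<open>The pair \<open>(P, y)\<close> stands for the edge between \<open>P\<close> and \<open>insert y P\<close> of the
  one-inclusion graph of \<open>F\<close> on the ground set \<open>S\<close>.\<close>
definition one_inclusion_edges :: "'a set set \<Rightarrow> 'a set \<Rightarrow> ('a set \<times> 'a) set" where
  "one_inclusion_edges F S = {(P, y). P \<in> F \<and> y \<in> S - P \<and> insert y P \<in> F}"

definition sauer_bound :: "nat \<Rightarrow> nat \<Rightarrow> nat" where
  "sauer_bound d m = (\<Sum>i\<le>d. m choose i)"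

lemma sauer_bound_0 [simp]: "sauer_bound 0 m = 1"
  by (simp add: sauer_bound_def)

lemma sauer_bound_0_right [simp]: "sauer_bound d 0 = 1"
  by (induction d) (simp_all add: sauer_bound_def)

lemma sauer_bound_Suc_Suc: "sauer_bound (Suc e) (Suc m) = sauer_bound (Suc e) m + sauer_bound e m"
  unfolding sauer_bound_def by (induction e) simp_all

lemma sauer_bound_mono: "m \<le> m' \<Longrightarrow> sauer_bound d m \<le> sauer_bound d m'"
  unfolding sauer_bound_def by (intro sum_mono binomial_right_mono)

lemma shatters_mono:
  assumes "shatters F Y" "F \<subseteq> F'"
  shows "shatters F' Y"
proof -
  have "(\<lambda>S. Y \<inter> S) ` F \<subseteq> (\<lambda>S. Y \<inter> S) ` F'"
    using assms(2) by (rule image_mono)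
  moreover have "(\<lambda>S. Y \<inter> S) ` F' \<subseteq> Pow Y"
    by blast
  ultimately show ?thesis
    using assms(1) unfolding shatters_def by (intro equalityI) auto
qed

lemma VC_at_most_mono: "VC_at_most F U d \<Longrightarrow> F' \<subseteq> F \<Longrightarrow> VC_at_most F' U d"
  unfolding VC_at_most_def using shatters_mono by blast

lemma trace_subset_Pow: "trace F S \<subseteq> Pow S"
  by (auto simp: trace_def)

lemma VC_at_most_trace: "VC_at_most F U d \<Longrightarrow> S \<subseteq> U \<Longrightarrow> VC_at_most (trace F S) S d"
  unfolding VC_at_most_def
proof safe
  fix Y assume F: "\<forall>Y\<subseteq>U. shatters F Y \<longrightarrow> card Y \<le> d"
    and "S \<subseteq> U" "Y \<subseteq> S" "shatters (trace F S) Y"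
  have "(\<lambda>Z. Y \<inter> Z) ` trace F S = (\<lambda>Z. Y \<inter> Z) ` F"
    unfolding trace_def image_image using \<open>Y \<subseteq> S\<close> by (intro image_cong) auto
  with \<open>shatters (trace F S) Y\<close> have "shatters F Y" by (simp add: shatters_def)
  with F \<open>S \<subseteq> U\<close> \<open>Y \<subseteq> S\<close> show "card Y \<le> d" by auto
qed

lemma finite_one_inclusion_edges: "finite F \<Longrightarrow> finite S \<Longrightarrow> finite (one_inclusion_edges F S)"
  by (rule finite_subset[of _ "F \<times> S"]) (auto simp: one_inclusion_edges_def)

definition erase :: "'a \<Rightarrow> 'a set set \<Rightarrow> 'a set set" where
  "erase x F = (\<lambda>P. P - {x}) ` F"

definition twins :: "'a \<Rightarrow> 'a set set \<Rightarrow> 'a set set" where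
  "twins x F = {P \<in> F. x \<notin> P \<and> insert x P \<in> F}"

lemma card_erase_add_card_twins:
  assumes "finite F"
  shows "card (erase x F) + card (twins x F) = card F"
proof -
  define F\<^sub>0 where "F\<^sub>0 = {P \<in> F. x \<notin> P}"
  define F\<^sub>1 where "F\<^sub>1 = {P \<in> F. x \<in> P}"
  have F: "F = F\<^sub>0 \<union> F\<^sub>1" "F\<^sub>0 \<inter> F\<^sub>1 = {}" "finite F\<^sub>0" "finite F\<^sub>1"
    using assms by (auto simp: F\<^sub>0_def F\<^sub>1_def)
  have "(\<lambda>P. P - {x}) ` F\<^sub>0 = id ` F\<^sub>0"
    by (intro image_cong) (auto simp: F\<^sub>0_def)
  then have "erase x F = F\<^sub>0 \<union> (\<lambda>P. P - {x}) ` F\<^sub>1"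
    unfolding erase_def by (subst F(1)) (simp add: image_Un)
  moreover have "F\<^sub>0 \<inter> (\<lambda>P. P - {x}) ` F\<^sub>1 = twins x F"
  proof (intro equalityI subsetI)
    fix P assume "P \<in> twins x F"
    then have "P \<in> F\<^sub>0" "insert x P \<in> F\<^sub>1" "P = insert x P - {x}"
      by (auto simp: twins_def F\<^sub>0_def F\<^sub>1_def)
    then show "P \<in> F\<^sub>0 \<inter> (\<lambda>P. P - {x}) ` F\<^sub>1" by blast
  qed (auto simp: twins_def F\<^sub>0_def F\<^sub>1_def insert_absorb)
  moreover have "inj_on (\<lambda>P. P - {x}) F\<^sub>1"
    by (rule inj_onI) (metis F\<^sub>1_def insert_Diff mem_Collect_eq)
  ultimately show ?thesis
    using card_Un_Int[of F\<^sub>0 "(\<lambda>P. P - {x}) ` F\<^sub>1"] card_Un_disjoint[of F\<^sub>0 F\<^sub>1] F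
    by (simp add: card_image)
qed

lemma VC_at_most_erase:
  assumes "VC_at_most F (insert x S) d" "x \<notin> S"
  shows "VC_at_most (erase x F) S d"
  unfolding VC_at_most_def
proof safe
  fix Y assume "Y \<subseteq> S" "shatters (erase x F) Y"
  have "(\<lambda>Z. Y \<inter> Z) ` erase x F = (\<lambda>Z. Y \<inter> Z) ` F"
    unfolding erase_def image_image using \<open>Y \<subseteq> S\<close> \<open>x \<notin> S\<close> by (intro image_cong) auto
  with \<open>shatters (erase x F) Y\<close> have "shatters F Y" by (simp add: shatters_def)
  with assms(1) \<open>Y \<subseteq> S\<close> show "card Y \<le> d" by (auto simp: VC_at_most_def)
qed

lemma shatters_insert_if_twins:
  assumes "shatters (twins x F) Y"
  shows "shatters F (insert x Y)"
  unfolding shatters_def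
proof (intro equalityI subsetI)
  fix Z assume "Z \<in> Pow (insert x Y)"
  then have "Z - {x} \<in> Pow Y" by auto
  then have "Z - {x} \<in> (\<lambda>S. Y \<inter> S) ` twins x F"
    using assms by (simp add: shatters_def)
  then obtain Q where Q: "Q \<in> twins x F" "Z - {x} = Y \<inter> Q"
    by blast
  then have "Q \<in> F" "insert x Q \<in> F" "x \<notin> Q" by (auto simp: twins_def)
  moreover have "Z = insert x Y \<inter> (if x \<in> Z then insert x Q else Q)"
    using Q(2) \<open>x \<notin> Q\<close> \<open>Z \<in> Pow (insert x Y)\<close> by auto
  ultimately show "Z \<in> (\<lambda>S. insert x Y \<inter> S) ` F"
    by (metis (full_types) image_eqI)
qed auto

lemma twins_eq_empty_if_VC_at_most_0:
  assumes "VC_at_most F (insert x S) 0"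
  shows "twins x F = {}"
proof
  show "twins x F \<subseteq> {}"
  proof
    fix P assume "P \<in> twins x F"
    then have "shatters (twins x F) {}" by (auto simp: shatters_def)
    then have "shatters F {x}" using shatters_insert_if_twins by fastforce
    with assms show "P \<in> {}" by (auto simp: VC_at_most_def)
  qed
qed simp

lemma VC_at_most_twins:
  assumes "VC_at_most F (insert x S) (Suc e)" "x \<notin> S"
  shows "VC_at_most (twins x F) S e"
  unfolding VC_at_most_def
proof safe
  fix Y assume "Y \<subseteq> S" "shatters (twins x F) Y"
  then have "shatters F (insert x Y)" "insert x Y \<subseteq> insert x S"
    using shatters_insert_if_twins by auto
  then have "card (insert x Y) \<le> Suc e"
    using assms(1) by (simp add: VC_at_most_def)
  moreover have "x \<notin> Y" using \<open>Y \<subseteq> S\<close> \<open>x \<notin> S\<close> by blast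
  ultimately show "card Y \<le> e" by (cases "finite Y") auto
qed

lemma one_inclusion_edges_insert:
  "x \<notin> S \<Longrightarrow>
    one_inclusion_edges F (insert x S) = (\<lambda>P. (P, x)) ` twins x F \<union> one_inclusion_edges F S"
  by (auto simp: one_inclusion_edges_def twins_def)

lemma erase_one_inclusion_edge:
  assumes "(P, y) \<in> one_inclusion_edges F S" "x \<notin> S"
  shows "(P - {x}, y) \<in> one_inclusion_edges (erase x F) S"
proof -
  have "insert y (P - {x}) = insert y P - {x}"
    using assms by (auto simp: one_inclusion_edges_def)
  then show ?thesis
    using assms(1) by (auto simp: erase_def one_inclusion_edges_def)
qed

lemma twins_one_inclusion_edge:
  assumes "(P, y) \<in> one_inclusion_edges F S" "(insert x P, y) \<in> one_inclusion_edges F S"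
    and "x \<notin> P" "x \<notin> S"
  shows "(P, y) \<in> one_inclusion_edges (twins x F) S"
proof -
  have "x \<notin> insert y P" "insert x (insert y P) = insert y (insert x P)"
    using assms by (auto simp: one_inclusion_edges_def)
  then show ?thesis
    using assms by (auto simp: one_inclusion_edges_def twins_def)
qed

text \<open>Erasing \<open>x\<close> maps the edges of \<open>F\<close> on \<open>S\<close> to edges of \<open>erase x F\<close>, at most two to
  one, and an edge with two preimages is an edge of \<open>twins x F\<close>.\<close>
lemma card_one_inclusion_edges_insert_le:
  assumes "x \<notin> S" "finite S" "finite F"
  shows "card (one_inclusion_edges F (insert x S)) \<le> card (twins x F)
    + card (one_inclusion_edges (erase x F) S) + card (one_inclusion_edges (twins x F) S)"
proof -
  define E where "E = one_inclusion_edges F S"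
  define E\<^sub>0 where "E\<^sub>0 = {(P, y). (P, y) \<in> E \<and> x \<notin> P}"
  define E\<^sub>1 where "E\<^sub>1 = {(P, y). (P, y) \<in> E \<and> x \<in> P}"
  define h where "h = (\<lambda>(P :: 'a set, y :: 'a). (P - {x}, y))"
  have "finite E"
    using assms(2,3) by (simp add: E_def finite_one_inclusion_edges)
  then have fin: "finite E\<^sub>0" "finite E\<^sub>1"
    by (auto simp: E\<^sub>0_def E\<^sub>1_def intro: rev_finite_subset)
  have "inj_on h E\<^sub>0"
    by (clarsimp simp: inj_on_def h_def E\<^sub>0_def)
  moreover have "inj_on h E\<^sub>1"
    by (clarsimp simp: inj_on_def h_def E\<^sub>1_def) (metis insert_Diff)
  moreover have "E = E\<^sub>0 \<union> E\<^sub>1" "E\<^sub>0 \<inter> E\<^sub>1 = {}"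
    by (auto simp: E\<^sub>0_def E\<^sub>1_def)
  ultimately have "card E = card (h ` E\<^sub>0 \<union> h ` E\<^sub>1) + card (h ` E\<^sub>0 \<inter> h ` E\<^sub>1)"
    using fin card_Un_Int[of "h ` E\<^sub>0" "h ` E\<^sub>1"] by (simp add: card_Un_disjoint card_image)
  also have "\<dots> \<le> card (one_inclusion_edges (erase x F) S) + card (one_inclusion_edges (twins x F) S)"
  proof (intro add_mono card_mono)
    show "finite (one_inclusion_edges (erase x F) S)" "finite (one_inclusion_edges (twins x F) S)"
      using assms by (simp_all add: finite_one_inclusion_edges twins_def erase_def)
    show "h ` E\<^sub>0 \<union> h ` E\<^sub>1 \<subseteq> one_inclusion_edges (erase x F) S"
      using erase_one_inclusion_edge assms(1) by (fastforce simp: h_def E_def E\<^sub>0_def E\<^sub>1_def)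
    show "h ` E\<^sub>0 \<inter> h ` E\<^sub>1 \<subseteq> one_inclusion_edges (twins x F) S"
    proof
      fix e assume "e \<in> h ` E\<^sub>0 \<inter> h ` E\<^sub>1"
      then obtain P P' y where A: "e = (P, y)" "(P, y) \<in> E" "x \<notin> P" "(P', y) \<in> E" "x \<in> P'"
        "P = P' - {x}"
        by (fastforce simp: h_def E\<^sub>0_def E\<^sub>1_def)
      then have "P' = insert x P"
        by auto
      with A(4) have "(insert x P, y) \<in> E"
        by simp
      with A(1-3) show "e \<in> one_inclusion_edges (twins x F) S"
        using twins_one_inclusion_edge[of P y F S x] assms(1) by (simp add: E_def)
    qed
  qed
  finally have "card (one_inclusion_edges F S)
      \<le> card (one_inclusion_edges (erase x F) S) + card (one_inclusion_edges (twins x F) S)"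
    by (simp add: E_def)
  moreover have "card (one_inclusion_edges F (insert x S)) \<le> card (twins x F) + card (one_inclusion_edges F S)"
  proof -
    have "card ((\<lambda>P. (P, x)) ` twins x F) = card (twins x F)"
      by (simp add: card_image inj_on_def)
    then show ?thesis
      unfolding one_inclusion_edges_insert[OF assms(1)] by (metis card_Un_le)
  qed
  ultimately show ?thesis
    by simp
qed

theorem sauer_shelah_one_inclusion:
  assumes "finite S" "F \<subseteq> Pow S" "VC_at_most F S d"
  shows "card F \<le> sauer_bound d (card S) \<and> card (one_inclusion_edges F S) \<le> d * card F"
  using assms
proof (induction S arbitrary: F d rule: finite_induct)
  case empty
  then have "card F \<le> card {{} :: 'a set}"
    by (intro card_mono) auto
  then show ?case
    by (simp add: one_inclusion_edges_def)
next
  case (insert x S)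
  have "finite F"
    using insert.hyps(1) insert.prems(1) by (meson finite_Pow_iff finite_insert finite_subset)
  then have card_F: "card F = card (erase x F) + card (twins x F)"
    by (simp add: card_erase_add_card_twins)
  have sub: "erase x F \<subseteq> Pow S" "twins x F \<subseteq> Pow S"
    using insert.prems(1) by (auto simp: erase_def twins_def)
  have IH_erase: "card (erase x F) \<le> sauer_bound d (card S)"
    "card (one_inclusion_edges (erase x F) S) \<le> d * card (erase x F)"
    using insert.IH[OF sub(1) VC_at_most_erase] insert.prems(2) insert.hyps(2) by auto
  have edges: "card (one_inclusion_edges F (insert x S)) \<le> card (twins x F)
      + card (one_inclusion_edges (erase x F) S) + card (one_inclusion_edges (twins x F) S)"
    by (rule card_one_inclusion_edges_insert_le[OF insert.hyps(2,1) \<open>finite F\<close>])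
  show ?case
  proof (cases d)
    case 0
    then have "twins x F = {}"
      using insert.prems(2) twins_eq_empty_if_VC_at_most_0[of F x S] by simp
    then show ?thesis
      using card_F IH_erase edges 0 by (simp add: one_inclusion_edges_def)
  next
    case (Suc e)
    have IH_twins: "card (twins x F) \<le> sauer_bound e (card S)"
      "card (one_inclusion_edges (twins x F) S) \<le> e * card (twins x F)"
      using insert.IH[OF sub(2) VC_at_most_twins] insert.prems(2) insert.hyps(2) Suc by auto
    have "card (insert x S) = Suc (card S)"
      using insert.hyps by simp
    then show ?thesis
      using card_F IH_erase IH_twins edges Suc sauer_bound_Suc_Suc[of e "card S"]
      by (simp add: algebra_simps)
  qed
qed

corollary card_le_sauer_bound:
  "finite S \<Longrightarrow> F \<subseteq> Pow S \<Longrightarrow> VC_at_most F S d \<Longrightarrow> card F \<le> sauer_bound d (card S)"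
  using sauer_shelah_one_inclusion by blast

corollary card_one_inclusion_edges_le:
  "finite S \<Longrightarrow> F \<subseteq> Pow S \<Longrightarrow> VC_at_most F S d \<Longrightarrow> card (one_inclusion_edges F S) \<le> d * card F"
  using sauer_shelah_one_inclusion by blast

lemma sum_of_bool_le_eq: "m \<le> M \<Longrightarrow> (\<Sum>t\<in>{1..M}. of_bool (t \<le> m)) = (m :: nat)"
proof -
  assume "m \<le> M"
  then have "{1..M} \<inter> {t. t \<le> m} = {1..m}"
    by auto
  then show ?thesis
    by simp
qed

text \<open>A layer-cake argument: the level sets \<open>{P \<in> F. t \<le> w P}\<close> inherit the VC bound.\<close>
lemma sum_weighted_one_inclusion_edges_le:
  fixes w :: "'a set \<Rightarrow> nat"
  assumes "finite S" "F \<subseteq> Pow S" "VC_at_most F S d"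
  shows "(\<Sum>(P, y)\<in>one_inclusion_edges F S. min (w P) (w (insert y P))) \<le> d * (\<Sum>P\<in>F. w P)"
proof -
  define M where "M = (\<Sum>P\<in>F. w P)"
  define L where "L t = {P \<in> F. t \<le> w P}" for t
  define E where "E = one_inclusion_edges F S"
  have "finite F"
    using assms(1,2) by (meson finite_Pow_iff finite_subset)
  have "finite E"
    using \<open>finite F\<close> assms(1) by (simp add: E_def finite_one_inclusion_edges)
  have w_le: "w P \<le> M" if "P \<in> F" for P
    using \<open>finite F\<close> that by (auto intro: member_le_sum simp: M_def)
  define m where "m = (\<lambda>(P, y). min (w P) (w (insert y P)))"
  have "sum m E = (\<Sum>e\<in>E. \<Sum>t\<in>{1..M}. of_bool (t \<le> m e))"
  proof (intro sum.cong refl)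
    fix e assume "e \<in> E"
    then have "m e \<le> M"
      using w_le by (auto simp: E_def one_inclusion_edges_def m_def min.coboundedI1)
    then show "m e = (\<Sum>t\<in>{1..M}. of_bool (t \<le> m e))"
      by (simp only: sum_of_bool_le_eq)
  qed
  also have "\<dots> = (\<Sum>t\<in>{1..M}. card (one_inclusion_edges (L t) S))"
  proof (subst sum.swap, intro sum.cong refl)
    fix t
    have "one_inclusion_edges (L t) S = E \<inter> {e. t \<le> m e}"
      by (auto simp: E_def one_inclusion_edges_def L_def m_def)
    then show "(\<Sum>e\<in>E. of_bool (t \<le> m e)) = card (one_inclusion_edges (L t) S)"
      using \<open>finite E\<close> by simp
  qed
  also have "\<dots> \<le> (\<Sum>t\<in>{1..M}. d * card (L t))"
    using assms by (intro sum_mono card_one_inclusion_edges_le) (auto simp: L_def intro: VC_at_most_mono)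
  also have "\<dots> = d * (\<Sum>t\<in>{1..M}. \<Sum>P\<in>F. of_bool (t \<le> w P))"
    using \<open>finite F\<close> by (simp add: sum_distrib_left L_def Int_def)
  also have "\<dots> = d * (\<Sum>P\<in>F. \<Sum>t\<in>{1..M}. of_bool (t \<le> w P))"
    by (subst sum.swap) (rule refl)
  also have "(\<Sum>P\<in>F. \<Sum>t\<in>{1..M}. of_bool (t \<le> w P)) = (\<Sum>P\<in>F. w P)"
  proof (rule sum.cong[OF refl])
    fix P assume "P \<in> F"
    then show "(\<Sum>t\<in>{1..M}. of_bool (t \<le> w P)) = w P"
      by (intro sum_of_bool_le_eq w_le)
  qed
  finally show ?thesis
    by (simp add: E_def m_def)
qed

section \<open>Haussler's packing lemma\<close>

lemma sum_card_sym_diff_eq: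
  assumes "finite C" "finite V" "\<And>P P'. P \<in> C \<Longrightarrow> P' \<in> C \<Longrightarrow> P - P' \<subseteq> V"
  shows "(\<Sum>P\<in>C. \<Sum>P'\<in>C. card (sym_diff P P'))
    = 2 * (\<Sum>a\<in>V. card {P \<in> C. a \<in> P} * card {P \<in> C. a \<notin> P})"
proof -
  have "card (P - P') = (\<Sum>a\<in>V. of_bool (a \<in> P) * of_bool (a \<notin> P'))" if "P \<in> C" "P' \<in> C" for P P'
  proof -
    have "V \<inter> {a. a \<in> P \<and> a \<notin> P'} = P - P'"
      using assms(3)[OF that] by blast
    then show ?thesis
      using assms(2) by (simp flip: of_bool_conj)
  qed
  then have "(\<Sum>P\<in>C. \<Sum>P'\<in>C. card (P - P'))
      = (\<Sum>P\<in>C. \<Sum>P'\<in>C. \<Sum>a\<in>V. of_bool (a \<in> P) * of_bool (a \<notin> P'))"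
    by simp
  also have "\<dots> = (\<Sum>a\<in>V. (\<Sum>P\<in>C. of_bool (a \<in> P)) * (\<Sum>P'\<in>C. of_bool (a \<notin> P')))"
    by (simp only: sum.swap[where B = V] sum_product)
  also have "\<dots> = (\<Sum>a\<in>V. card {P \<in> C. a \<in> P} * card {P \<in> C. a \<notin> P})"
    using assms(1) by (simp add: Int_def conj_commute)
  finally have diff: "(\<Sum>P\<in>C. \<Sum>P'\<in>C. card (P - P')) = \<dots>" .
  have "card (sym_diff P P') = card (P - P') + card (P' - P)" if "P \<in> C" "P' \<in> C" for P P'
    using assms(3)[OF that] assms(3)[OF that(2,1)] assms(2)
    by (intro card_Un_disjoint) (auto intro: finite_subset)
  then have "(\<Sum>P\<in>C. \<Sum>P'\<in>C. card (sym_diff P P'))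
      = (\<Sum>P\<in>C. \<Sum>P'\<in>C. card (P - P')) + (\<Sum>P\<in>C. \<Sum>P'\<in>C. card (P' - P))"
    by (simp add: sum.distrib)
  also have "(\<Sum>P\<in>C. \<Sum>P'\<in>C. card (P' - P)) = (\<Sum>P\<in>C. \<Sum>P'\<in>C. card (P - P'))"
    by (rule sum.swap)
  finally show ?thesis
    by (simp add: diff)
qed

lemma card_mult_le_sum_card_sym_diff:
  fixes \<delta> :: real
  assumes "finite C"
    and sep: "\<And>P P'. P \<in> C \<Longrightarrow> P' \<in> C \<Longrightarrow> P \<noteq> P' \<Longrightarrow> \<delta> \<le> card (sym_diff P P')"
  shows "card C * ((real (card C) - 1) * \<delta>) \<le> (\<Sum>P\<in>C. \<Sum>P'\<in>C. real (card (sym_diff P P')))"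
proof -
  have "(real (card C) - 1) * \<delta> \<le> (\<Sum>P'\<in>C. real (card (sym_diff P P')))" if "P \<in> C" for P
  proof -
    have "card C \<ge> 1"
      using assms(1) that by (auto simp: Suc_le_eq card_gt_0_iff)
    then have "(real (card C) - 1) * \<delta> = (\<Sum>P'\<in>C - {P}. \<delta>)"
      using that assms(1) by (simp add: card_Diff_singleton of_nat_diff)
    also have "\<dots> \<le> (\<Sum>P'\<in>C - {P}. real (card (sym_diff P P')))"
      using sep that by (intro sum_mono) auto
    also have "\<dots> = (\<Sum>P'\<in>C. real (card (sym_diff P P')))"
      using sum.remove[OF assms(1) that, of "\<lambda>P'. real (card (sym_diff P P'))"] by simp
    finally show ?thesis .
  qed
  then show ?thesis
    using sum_mono[of C "\<lambda>_. (real (card C) - 1) * \<delta>"] by simp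
qed

lemma separated_family_bound:
  fixes \<delta> :: real
  assumes "finite C" "C \<noteq> {}" "finite V"
    and diff: "\<And>P P'. P \<in> C \<Longrightarrow> P' \<in> C \<Longrightarrow> P - P' \<subseteq> V"
    and sep: "\<And>P P'. P \<in> C \<Longrightarrow> P' \<in> C \<Longrightarrow> P \<noteq> P' \<Longrightarrow> \<delta> \<le> card (sym_diff P P')"
  shows "(real (card C) - 1) * \<delta> \<le> 2 * real (\<Sum>a\<in>V. min (card {P \<in> C. a \<in> P}) (card {P \<in> C. a \<notin> P}))"
proof -
  define k where "k a = card {P \<in> C. a \<in> P}" for a
  define l where "l a = card {P \<in> C. a \<notin> P}" for a
  have "card C = k a + l a" for a
  proof -
    have "card C = card ({P \<in> C. a \<in> P} \<union> {P \<in> C. a \<notin> P})"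
      by (rule arg_cong[where f = card]) blast
    also have "\<dots> = k a + l a"
      unfolding k_def l_def using assms(1) by (intro card_Un_disjoint) auto
    finally show ?thesis .
  qed
  moreover have "k a * l a \<le> (k a + l a) * min (k a) (l a)" for a
    by (cases "k a \<le> l a") (simp_all add: min_def add_mult_distrib add_mult_distrib2)
  ultimately have "k a * l a \<le> card C * min (k a) (l a)" for a
    by simp
  have "card C * ((real (card C) - 1) * \<delta>) \<le> (\<Sum>P\<in>C. \<Sum>P'\<in>C. real (card (sym_diff P P')))"
    using assms(1) sep by (rule card_mult_le_sum_card_sym_diff)
  also have "\<dots> = 2 * real (\<Sum>a\<in>V. k a * l a)"
    unfolding k_def l_def using sum_card_sym_diff_eq[OF assms(1,3) diff] by (simp flip: of_nat_sum)
  also have "\<dots> \<le> 2 * real (card C * (\<Sum>a\<in>V. min (k a) (l a)))"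
    using \<open>\<And>a. k a * l a \<le> card C * min (k a) (l a)\<close>
    by (simp add: sum_mono sum_distrib_left del: of_nat_sum)
  finally have "card C * ((real (card C) - 1) * \<delta>) \<le> card C * (2 * real (\<Sum>a\<in>V. min (k a) (l a)))"
    by (simp add: mult_ac)
  moreover have "card C > 0"
    using assms(1,2) by (simp add: card_gt_0_iff)
  ultimately show ?thesis
    by (simp add: k_def l_def)
qed

definition trace_count :: "'a set set \<Rightarrow> 'a set \<Rightarrow> 'a set \<Rightarrow> nat" where
  "trace_count F S Q = card {P \<in> F. P \<inter> S = Q}"

text \<open>The one-inclusion edges of \<open>trace F (insert a S)\<close> in direction \<open>a\<close>, each weighted by
  the smaller of the numbers of members of \<open>F\<close> over its two endpoints.\<close>
definition edge_weight :: "'a set set \<Rightarrow> 'a set \<Rightarrow> 'a \<Rightarrow> nat" where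
  "edge_weight F S a =
    (\<Sum>Q\<in>Pow S. min (trace_count F (insert a S) Q) (trace_count F (insert a S) (insert a Q)))"

lemma sum_trace_count: "finite F \<Longrightarrow> (\<Sum>Q\<in>trace F S. trace_count F S Q) = card F"
  unfolding trace_def trace_count_def
  using sum.image_gen[of F "\<lambda>_. 1 :: nat" "\<lambda>P. P \<inter> S"] by simp

lemma trace_count_eq_0:
  assumes "Q \<notin> trace F S"
  shows "trace_count F S Q = 0"
proof -
  have "{P \<in> F. P \<inter> S = Q} = {}"
    using assms by (auto simp: trace_def)
  then show ?thesis
    unfolding trace_count_def by (metis card.empty)
qed

lemma trace_class_bound:
  fixes \<delta> :: real
  assumes "finite U" "F \<subseteq> Pow U" "Q \<in> trace F S"
    and sep: "\<And>P P'. P \<in> F \<Longrightarrow> P' \<in> F \<Longrightarrow> P \<noteq> P' \<Longrightarrow> \<delta> \<le> card (sym_diff P P')"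
  shows "(real (trace_count F S Q) - 1) * \<delta>
    \<le> 2 * real (\<Sum>a\<in>U - S. min (trace_count F (insert a S) Q) (trace_count F (insert a S) (insert a Q)))"
proof -
  define C where "C = {P \<in> F. P \<inter> S = Q}"
  have "Q \<subseteq> S"
    using assms(3) by (auto simp: trace_def)
  have "finite C"
    using assms(1,2) by (auto simp: C_def intro: finite_subset[of _ "Pow U"])
  moreover have "C \<noteq> {}"
    using assms(3) by (auto simp: C_def trace_def)
  moreover have "P - P' \<subseteq> U - S" if "P \<in> C" "P' \<in> C" for P P'
    using that assms(2) by (auto simp: C_def)
  ultimately have "(real (card C) - 1) * \<delta>
      \<le> 2 * real (\<Sum>a\<in>U - S. min (card {P \<in> C. a \<in> P}) (card {P \<in> C. a \<notin> P}))"
    using assms(1) sep by (intro separated_family_bound) (auto simp: C_def)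
  also have "(\<Sum>a\<in>U - S. min (card {P \<in> C. a \<in> P}) (card {P \<in> C. a \<notin> P}))
      = (\<Sum>a\<in>U - S. min (trace_count F (insert a S) Q) (trace_count F (insert a S) (insert a Q)))"
  proof (intro sum.cong refl)
    fix a assume "a \<in> U - S"
    then have "{P \<in> C. a \<in> P} = {P \<in> F. P \<inter> insert a S = insert a Q}"
      "{P \<in> C. a \<notin> P} = {P \<in> F. P \<inter> insert a S = Q}"
      using \<open>Q \<subseteq> S\<close> by (auto simp: C_def)
    then show "min (card {P \<in> C. a \<in> P}) (card {P \<in> C. a \<notin> P})
        = min (trace_count F (insert a S) Q) (trace_count F (insert a S) (insert a Q))"
      by (simp add: trace_count_def min.commute)
  qed
  finally show ?thesis
    by (simp add: C_def trace_count_def)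
qed

lemma card_sub_sauer_bound_le_edge_weight:
  fixes \<delta> :: real
  assumes "finite U" "F \<subseteq> Pow U" "VC_at_most F U d" "S \<subseteq> U" "0 \<le> \<delta>"
    and sep: "\<And>P P'. P \<in> F \<Longrightarrow> P' \<in> F \<Longrightarrow> P \<noteq> P' \<Longrightarrow> \<delta> \<le> card (sym_diff P P')"
  shows "(card F - real (sauer_bound d (card S))) * \<delta> \<le> 2 * real (\<Sum>a\<in>U - S. edge_weight F S a)"
proof -
  define g where "g Q a = min (trace_count F (insert a S) Q) (trace_count F (insert a S) (insert a Q))" for Q a
  have "finite F" "finite S"
    using assms(1,2,4) by (auto intro: finite_subset[of _ "Pow U"] finite_subset[of _ U])
  have "card (trace F S) \<le> sauer_bound d (card S)"
    using \<open>finite S\<close> assms(3,4) by (intro card_le_sauer_bound trace_subset_Pow VC_at_most_trace)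
  then have "(card F - real (sauer_bound d (card S))) * \<delta> \<le> (card F - real (card (trace F S))) * \<delta>"
    using assms(5) by (intro mult_right_mono) auto
  also have "\<dots> = (\<Sum>Q\<in>trace F S. (real (trace_count F S Q) - 1) * \<delta>)"
    using sum_trace_count[OF \<open>finite F\<close>, of S]
    by (simp add: sum_subtractf flip: sum_distrib_right of_nat_sum)
  also have "\<dots> \<le> (\<Sum>Q\<in>trace F S. 2 * real (\<Sum>a\<in>U - S. g Q a))"
    unfolding g_def using assms(1,2) sep by (intro sum_mono trace_class_bound)
  also have "\<dots> \<le> (\<Sum>Q\<in>Pow S. 2 * real (\<Sum>a\<in>U - S. g Q a))"
    using \<open>finite S\<close> trace_subset_Pow by (intro sum_mono2) (auto simp del: of_nat_sum)
  also have "\<dots> = 2 * real (\<Sum>a\<in>U - S. edge_weight F S a)"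
  proof -
    have "(\<Sum>a\<in>U - S. edge_weight F S a) = (\<Sum>Q\<in>Pow S. \<Sum>a\<in>U - S. g Q a)"
      unfolding edge_weight_def g_def by (rule sum.swap)
    then show ?thesis
      by (simp add: sum_distrib_left)
  qed
  finally show ?thesis .
qed

lemma sum_edge_weight_le:
  assumes "finite U" "F \<subseteq> Pow U" "VC_at_most F U d" "S \<subseteq> U"
  shows "(\<Sum>a\<in>S. edge_weight F (S - {a}) a) \<le> d * card F"
proof -
  define w where "w = trace_count F S"
  define m where "m = (\<lambda>(Q, a). min (w Q) (w (insert a Q)))"
  define D where "D = Sigma S (\<lambda>a. Pow (S - {a}))"
  have "finite S" "finite F"
    using assms(1,2,4) by (auto intro: finite_subset[of _ "Pow U"] finite_subset[of _ U])
  have "(\<Sum>a\<in>S. edge_weight F (S - {a}) a) = (\<Sum>a\<in>S. \<Sum>Q\<in>Pow (S - {a}). m (Q, a))"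
    by (intro sum.cong refl) (simp add: edge_weight_def m_def w_def insert_absorb)
  also have "\<dots> = (\<Sum>(a, Q)\<in>D. m (Q, a))"
    unfolding D_def using \<open>finite S\<close> by (intro sum.Sigma) auto
  also have "\<dots> = (\<Sum>e\<in>prod.swap ` D. m e)"
    by (subst sum.reindex) (simp_all add: case_prod_unfold prod.swap_def)
  also have "\<dots> = (\<Sum>e\<in>one_inclusion_edges (trace F S) S. m e)"
  proof (rule sum.mono_neutral_right)
    show "finite (prod.swap ` D)"
      using \<open>finite S\<close> by (simp add: D_def)
    show "one_inclusion_edges (trace F S) S \<subseteq> prod.swap ` D"
      using trace_subset_Pow by (force simp: D_def one_inclusion_edges_def)
    show "\<forall>e\<in>prod.swap ` D - one_inclusion_edges (trace F S) S. m e = 0"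
    proof
      fix e assume "e \<in> prod.swap ` D - one_inclusion_edges (trace F S) S"
      then obtain Q a where "e = (Q, a)" "Q \<notin> trace F S \<or> insert a Q \<notin> trace F S"
        by (auto simp: D_def one_inclusion_edges_def)
      then show "m e = 0"
        by (auto simp: m_def w_def trace_count_eq_0)
    qed
  qed
  also have "\<dots> \<le> d * (\<Sum>Q\<in>trace F S. w Q)"
    unfolding m_def using \<open>finite S\<close> assms(3,4)
    by (intro sum_weighted_one_inclusion_edges_le trace_subset_Pow VC_at_most_trace)
  also have "(\<Sum>Q\<in>trace F S. w Q) = card F"
    unfolding w_def using \<open>finite F\<close> by (rule sum_trace_count)
  finally show ?thesis .
qed

lemma sum_edge_weight_subsets_eq:
  assumes "finite U"
  shows "(\<Sum>S | S \<subseteq> U \<and> card S = s. \<Sum>a\<in>U - S. edge_weight F S a)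
       = (\<Sum>S | S \<subseteq> U \<and> card S = Suc s. \<Sum>a\<in>S. edge_weight F (S - {a}) a)"
proof -
  have fin: "finite {S. S \<subseteq> U \<and> card S = k}" for k
    using assms by (auto intro: finite_subset[of _ "Pow U"])
  have finite_subsets: "\<And>S. S \<subseteq> U \<Longrightarrow> finite S"
    using assms by (rule finite_subset[rotated])
  have "(\<Sum>S | S \<subseteq> U \<and> card S = s. \<Sum>a\<in>U - S. edge_weight F S a)
      = (\<Sum>(S, a)\<in>Sigma {S. S \<subseteq> U \<and> card S = s} (\<lambda>S. U - S). edge_weight F S a)"
    using assms fin by (intro sum.Sigma) auto
  also have "\<dots> = (\<Sum>(S, a)\<in>Sigma {S. S \<subseteq> U \<and> card S = Suc s} (\<lambda>S. S). edge_weight F (S - {a}) a)"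
    using finite_subsets
    by (intro sum.reindex_bij_witness[where i = "\<lambda>(S, a). (S - {a}, a)" and j = "\<lambda>(S, a). (insert a S, a)"])
      (auto simp: card_Diff_singleton insert_absorb)
  also have "\<dots> = (\<Sum>S | S \<subseteq> U \<and> card S = Suc s. \<Sum>a\<in>S. edge_weight F (S - {a}) a)"
    using fin finite_subsets by (intro sum.Sigma[symmetric]) auto
  finally show ?thesis .
qed

text \<open>Sum the lower bound \<open>card_sub_sauer_bound_le_edge_weight\<close> over all \<open>s\<close>-subsets of \<open>U\<close> and
  the upper bound \<open>sum_edge_weight_le\<close> over all \<open>(s + 1)\<close>-subsets; both sums count the same
  edge weights.\<close>
lemma haussler_averaging:
  fixes \<delta> :: real
  assumes "finite U" "F \<subseteq> Pow U" "VC_at_most F U d" "s \<le> card U" "0 \<le> \<delta>"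
    and sep: "\<And>P P'. P \<in> F \<Longrightarrow> P' \<in> F \<Longrightarrow> P \<noteq> P' \<Longrightarrow> \<delta> \<le> card (sym_diff P P')"
  shows "(card F - real (sauer_bound d s)) * \<delta> * Suc s \<le> 2 * real (card U - s) * d * card F"
proof -
  define n where "n = card U"
  define gap where "gap = (card F - real (sauer_bound d s)) * \<delta>"
  let ?subsets = "\<lambda>k. {S. S \<subseteq> U \<and> card S = k}"
  have card_subsets: "card (?subsets k) = n choose k" for k
    using n_subsets[OF assms(1)] by (simp add: n_def)
  have "real (n choose s) * gap = (\<Sum>S\<in>?subsets s. gap)"
    by (simp add: card_subsets)
  also have "\<dots> \<le> (\<Sum>S\<in>?subsets s. 2 * real (\<Sum>a\<in>U - S. edge_weight F S a))"
  proof (rule sum_mono)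
    fix S assume "S \<in> ?subsets s"
    then show "gap \<le> 2 * real (\<Sum>a\<in>U - S. edge_weight F S a)"
      unfolding gap_def using card_sub_sauer_bound_le_edge_weight[OF assms(1-3) _ assms(5) sep, of S]
      by auto
  qed
  also have "\<dots> = 2 * real (\<Sum>S\<in>?subsets s. \<Sum>a\<in>U - S. edge_weight F S a)"
    by (simp add: sum_distrib_left)
  also have "\<dots> = 2 * real (\<Sum>S\<in>?subsets (Suc s). \<Sum>a\<in>S. edge_weight F (S - {a}) a)"
    by (simp only: sum_edge_weight_subsets_eq[OF assms(1)])
  also have "\<dots> \<le> 2 * real (\<Sum>S\<in>?subsets (Suc s). d * card F)"
    using assms(1-3) by (intro mult_left_mono of_nat_mono sum_mono sum_edge_weight_le) auto
  also have "\<dots> = 2 * real (n choose Suc s) * d * card F"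
    by (simp add: card_subsets)
  finally have "real (n choose s) * gap \<le> 2 * real (n choose Suc s) * d * card F" .
  then have "Suc s * (real (n choose s) * gap) \<le> 2 * (Suc s * real (n choose Suc s)) * d * card F"
    by (simp add: mult_left_mono mult_ac)
  also have "Suc s * real (n choose Suc s) = real (n - s) * real (n choose s)"
    using binomial_absorption[of s n] binomial_absorb_comp[of n s] by (metis of_nat_mult)
  finally have "real (n choose s) * (gap * Suc s) \<le> real (n choose s) * (2 * real (n - s) * d * card F)"
    by (simp add: mult_ac)
  moreover have "real (n choose s) > 0"
    using assms(4) by (simp add: n_def)
  ultimately show ?thesis
    by (simp add: gap_def n_def)
qed

lemma sauer_bound_le_exp:
  assumes "1 \<le> d" "d \<le> k"
  shows "real (sauer_bound d k) \<le> (exp 1 * k / d) ^ d"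
proof -
  define r where "r = real k / d"
  define q where "q = real d / k"
  have "real k > 0" "real d > 0"
    using assms by auto
  then have "r \<ge> 1" "q * r = 1" "q \<ge> 0"
    using assms by (simp_all add: r_def q_def)
  have "real (sauer_bound d k) \<le> (\<Sum>i\<le>d. real (k choose i) * r ^ (d - i))"
    unfolding sauer_bound_def of_nat_sum
    using \<open>r \<ge> 1\<close> by (intro sum_mono) (simp add: mult_le_cancel_left1 one_le_power)
  also have "\<dots> = r ^ d * (\<Sum>i\<le>d. real (k choose i) * q ^ i)"
  proof -
    have "r ^ (d - i) = r ^ d * q ^ i" if "i \<le> d" for i
    proof -
      have "r ^ (d - i) = r ^ (d - i) * (q * r) ^ i"
        using \<open>q * r = 1\<close> by simp
      also have "\<dots> = r ^ (d - i + i) * q ^ i"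
        by (simp add: power_add power_mult_distrib mult_ac)
      finally show ?thesis
        using that by simp
    qed
    then show ?thesis
      by (simp add: sum_distrib_left mult_ac)
  qed
  also have "\<dots> \<le> r ^ d * (\<Sum>i\<le>k. real (k choose i) * q ^ i)"
    using assms \<open>q \<ge> 0\<close> \<open>r \<ge> 1\<close> by (intro mult_left_mono sum_mono2) auto
  also have "(\<Sum>i\<le>k. real (k choose i) * q ^ i) = (q + 1) ^ k"
    by (simp add: binomial_ring)
  also have "(q + 1) ^ k \<le> exp q ^ k"
    using \<open>q \<ge> 0\<close> exp_ge_add_one_self[of q] by (intro power_mono) (auto simp: add.commute)
  also have "exp q ^ k = exp 1 ^ d"
    using \<open>real k > 0\<close> by (simp add: q_def flip: exp_of_nat_mult)
  finally have "real (sauer_bound d k) \<le> r ^ d * exp 1 ^ d"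
    using \<open>r \<ge> 1\<close> by simp
  then show ?thesis
    by (simp add: r_def mult.commute flip: power_mult_distrib)
qed

lemma two_sauer_bound_le:
  fixes \<epsilon> :: real
  assumes "1 \<le> d" "0 < \<epsilon>" "\<epsilon> < 1"
  shows "2 * real (sauer_bound d (nat \<lceil>4 * real d / \<epsilon>\<rceil>)) \<le> (30 / \<epsilon>) ^ d"
proof -
  define k where "k = nat \<lceil>4 * real d / \<epsilon>\<rceil>"
  have "4 * real d / \<epsilon> \<le> k"
    unfolding k_def by linarith
  moreover have "k \<le> 4 * real d / \<epsilon> + 1"
    unfolding k_def using assms(2) by (simp add: of_nat_nat)
  moreover have "4 * real d \<le> 4 * real d / \<epsilon>" "1 \<le> d / \<epsilon>"
    using assms by (simp_all add: le_divide_eq)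
  moreover have "5 * real d / \<epsilon> = 4 * real d / \<epsilon> + d / \<epsilon>"
    by (simp add: field_simps)
  ultimately have "real d \<le> k" "k \<le> 5 * real d / \<epsilon>"
    by linarith+
  then have "d \<le> k"
    by simp
  have "k / d \<le> 5 / \<epsilon>"
    using \<open>k \<le> 5 * real d / \<epsilon>\<close> assms by (simp add: field_simps)
  then have "exp 1 * k / d \<le> exp 1 * (5 / \<epsilon>)"
    using mult_left_mono[of "k / d" "5 / \<epsilon>" "exp 1"] by simp
  also have "\<dots> \<le> 15 / \<epsilon>"
    using exp_le assms(2) by (simp add: field_simps)
  finally have "exp 1 * k / d \<le> 15 / \<epsilon>" .
  have "real (sauer_bound d k) \<le> (exp 1 * k / d) ^ d"
    using assms(1) \<open>d \<le> k\<close> by (rule sauer_bound_le_exp)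
  also have "\<dots> \<le> (15 / \<epsilon>) ^ d"
    using \<open>exp 1 * k / d \<le> 15 / \<epsilon>\<close> by (intro power_mono) auto
  finally have "2 * real (sauer_bound d k) \<le> 2 * (15 / \<epsilon>) ^ d"
    by simp
  also have "\<dots> \<le> 2 ^ d * (15 / \<epsilon>) ^ d"
    using assms by (intro mult_right_mono) (auto simp: self_le_power)
  finally show ?thesis
    by (simp add: k_def flip: power_mult_distrib)
qed

lemma card_le_two_sauer_bound:
  fixes \<epsilon> :: real
  assumes "finite U" "U \<noteq> {}" "F \<subseteq> Pow U" "VC_at_most F U d" "0 < \<epsilon>"
    and sep: "\<And>P P'. P \<in> F \<Longrightarrow> P' \<in> F \<Longrightarrow> P \<noteq> P' \<Longrightarrow> \<epsilon> * card U \<le> card (sym_diff P P')"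
    and "4 * real d \<le> \<epsilon> * Suc k"
  shows "card F \<le> 2 * real (sauer_bound d (min (card U) k))"
proof -
  define n where "n = card U"
  define s where "s = min n k"
  define c where "c = real (card F)"
  have "n > 0"
    using assms(1,2) by (simp add: n_def card_gt_0_iff)
  have core: "(c - sauer_bound d s) * (\<epsilon> * n) * Suc s \<le> 2 * real (n - s) * d * c"
    using haussler_averaging[OF assms(1,3,4) _ _ sep] assms(5)
    unfolding c_def n_def s_def by simp
  have "4 * real d * real (n - s) \<le> \<epsilon> * n * Suc s"
  proof (cases "s = n")
    case False
    then have "4 * real d \<le> \<epsilon> * Suc s"
      using assms(7) by (auto simp: s_def)
    have "4 * real d * real (n - s) \<le> 4 * real d * real n"
      by (intro mult_left_mono) auto
    also have "\<dots> \<le> \<epsilon> * Suc s * n"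
      using \<open>4 * real d \<le> \<epsilon> * Suc s\<close> by (intro mult_right_mono) auto
    finally show ?thesis
      by (simp add: mult_ac)
  qed (use assms(5) in simp)
  then have "4 * real d * real (n - s) * (c / 2) \<le> \<epsilon> * n * Suc s * (c / 2)"
    by (rule mult_right_mono) (simp add: c_def)
  moreover have "(c - sauer_bound d s) * (\<epsilon> * n * Suc s) \<le> 4 * real d * real (n - s) * (c / 2)"
    using core by (simp add: field_simps)
  ultimately have "(c - sauer_bound d s) * (\<epsilon> * n * Suc s) \<le> (c / 2) * (\<epsilon> * n * Suc s)"
    by (simp add: mult_ac)
  moreover have "\<epsilon> * n * Suc s > 0"
    using assms(5) \<open>n > 0\<close> by simp
  ultimately have "c - sauer_bound d s \<le> c / 2"
    by (simp only: mult_le_cancel_right_pos)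
  then show ?thesis
    by (simp add: c_def n_def s_def)
qed

theorem haussler_packing:
  fixes \<epsilon> :: real
  assumes "finite U" "U \<noteq> {}" "F \<subseteq> Pow U" "VC_at_most F U d" "0 < \<epsilon>" "\<epsilon> < 1"
    and sep: "\<And>P P'. P \<in> F \<Longrightarrow> P' \<in> F \<Longrightarrow> P \<noteq> P' \<Longrightarrow> \<epsilon> * card U \<le> card (sym_diff P P')"
  shows "card F \<le> (30 / \<epsilon>) ^ d"
proof (cases "d = 0")
  case True
  then show ?thesis
    using card_le_sauer_bound[OF assms(1,3,4)] by simp
next
  case False
  define k where "k = nat \<lceil>4 * real d / \<epsilon>\<rceil>"
  have "4 * real d / \<epsilon> \<le> k"
    unfolding k_def by linarith
  then have "4 * real d \<le> \<epsilon> * Suc k"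
    using assms(5) by (simp add: field_simps)
  then have "card F \<le> 2 * real (sauer_bound d (min (card U) k))"
    using card_le_two_sauer_bound[OF assms(1-5) sep] by blast
  also have "\<dots> \<le> 2 * real (sauer_bound d k)"
    by (simp add: sauer_bound_mono)
  also have "\<dots> \<le> (30 / \<epsilon>) ^ d"
    unfolding k_def using False assms(5,6) by (intro two_sauer_bound_le) auto
  finally show ?thesis .
qed

lemma exists_small_net:
  fixes f :: "'b \<Rightarrow> 'a set" and \<epsilon> N :: real
  assumes "finite B" "finite U" "U \<noteq> {}" "\<And>b. b \<in> B \<Longrightarrow> f b \<subseteq> U"
    and "0 < \<epsilon>" "\<epsilon> < 1" "\<epsilon> * card U \<le> N" "VC_at_most (f ` B) U d"
  shows "\<exists>F\<subseteq>B. card F \<le> (30 / \<epsilon>) ^ d \<and> (\<forall>b\<in>B. \<exists>x\<in>F. card (sym_diff (f b) (f x)) \<le> N)"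
proof -
  define separated where "separated F \<longleftrightarrow> (\<forall>x\<in>F. \<forall>y\<in>F. x \<noteq> y \<longrightarrow> N < card (sym_diff (f x) (f y)))"
    for F
  have "card U > 0"
    using assms(2,3) by (simp add: card_gt_0_iff)
  then have "N > 0"
    using assms(5,7) by (metis less_le_trans mult_pos_pos of_nat_0_less_iff)
  obtain F where "F \<subseteq> B" "separated F"
    and maximal: "\<And>F'. F' \<subseteq> B \<Longrightarrow> separated F' \<Longrightarrow> F \<subseteq> F' \<Longrightarrow> F = F'"
    using finite_has_maximal[of "{F. F \<subseteq> B \<and> separated F}"] assms(1)
    by (force simp: separated_def)
  have net: "\<exists>x\<in>F. card (sym_diff (f b) (f x)) \<le> N" if "b \<in> B" for b
  proof (cases "b \<in> F")
    case True
    then show ?thesis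
      using \<open>N > 0\<close> by force
  next
    case False
    then have "\<not> separated (insert b F)"
      using maximal[of "insert b F"] \<open>F \<subseteq> B\<close> that by blast
    with \<open>separated F\<close> show ?thesis
      unfolding separated_def by (auto simp: Un_commute not_less)
  qed
  have "inj_on f F"
  proof (rule inj_onI, rule ccontr)
    fix x y assume "x \<in> F" "y \<in> F" "f x = f y" "x \<noteq> y"
    then have "N < card (sym_diff (f x) (f y))"
      using \<open>separated F\<close> unfolding separated_def by blast
    with \<open>f x = f y\<close> \<open>N > 0\<close> show False
      by simp
  qed
  moreover have "card (f ` F) \<le> (30 / \<epsilon>) ^ d"
  proof (rule haussler_packing[OF assms(2,3) _ _ assms(5,6)])
    show "f ` F \<subseteq> Pow U"
      using assms(4) \<open>F \<subseteq> B\<close> by auto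
    show "VC_at_most (f ` F) U d"
      using assms(8) \<open>F \<subseteq> B\<close> by (auto intro: VC_at_most_mono)
    show "\<epsilon> * card U \<le> card (sym_diff P P')" if "P \<in> f ` F" "P' \<in> f ` F" "P \<noteq> P'" for P P'
      using that \<open>separated F\<close> assms(7) by (force simp: separated_def)
  qed
  ultimately show ?thesis
    using \<open>F \<subseteq> B\<close> net by (auto simp: card_image)
qed

section \<open>Translates in a group\<close>

lemma card_le_VC:
  assumes "finite \<F>" "Y \<subseteq> V" "finite Y" "shatters \<F> Y"
  shows "card Y \<le> VC V \<F>"
proof -
  define K where "K = card ` {Y. Y \<subseteq> V \<and> finite Y \<and> shatters \<F> Y}"
  have "K \<subseteq> {..card \<F>}"
  proof
    fix m assume "m \<in> K"
    then obtain Z where Z: "m = card Z" "finite Z" "shatters \<F> Z"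
      by (auto simp: K_def)
    then have "2 ^ card Z \<le> card \<F>"
      using assms(1) card_image_le[of \<F> "\<lambda>S. Z \<inter> S"] by (simp add: shatters_def card_Pow)
    moreover have "card Z < 2 ^ card Z"
      by (rule less_exp)
    ultimately have "card Z \<le> card \<F>"
      by linarith
    then show "m \<in> {..card \<F>}"
      using Z(1) by simp
  qed
  then have "finite K"
    by (rule finite_subset) simp
  moreover have "card Y \<in> K"
    using assms(2-4) by (auto simp: K_def)
  ultimately show ?thesis
    unfolding VC_def K_def[symmetric] by simp
qed

lemma VC_at_most_VC:
  assumes "finite \<F>" "U \<subseteq> V"
  shows "VC_at_most \<F> U (VC V \<F>)"
  unfolding VC_at_most_def
proof safe
  fix Y assume "Y \<subseteq> U" "shatters \<F> Y"
  then show "card Y \<le> VC V \<F>"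
    using assms by (cases "finite Y") (auto intro: card_le_VC)
qed

lemma card_sym_diff_image:
  assumes "inj_on h (P \<union> Q)"
  shows "card (sym_diff (h ` P) (h ` Q)) = card (sym_diff P Q)"
proof -
  have "h ` P - h ` Q = h ` (P - Q)" "h ` Q - h ` P = h ` (Q - P)"
    by (rule inj_on_image_set_diff[symmetric, OF assms]; blast)+
  then have "sym_diff (h ` P) (h ` Q) = h ` sym_diff P Q"
    by (simp add: image_Un)
  moreover have "inj_on h (sym_diff P Q)"
    using assms by (rule inj_on_subset) auto
  ultimately show ?thesis
    by (simp add: card_image)
qed

lemma l_coset_eq_image: "x <#\<^bsub>G\<^esub> A = (\<lambda>a. x \<otimes>\<^bsub>G\<^esub> a) ` A"
  by (auto simp: l_coset_def)

lemma r_coset_eq_image: "A #>\<^bsub>G\<^esub> x = (\<lambda>a. a \<otimes>\<^bsub>G\<^esub> x) ` A"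
  by (auto simp: r_coset_def)

lemma set_multI: "h \<in> H \<Longrightarrow> k \<in> K \<Longrightarrow> h \<otimes>\<^bsub>G\<^esub> k \<in> H <#>\<^bsub>G\<^esub> K"
  by (auto simp: set_mult_def)

lemma finite_set_mult: "finite H \<Longrightarrow> finite K \<Longrightarrow> finite (H <#>\<^bsub>G\<^esub> K)"
  by (simp add: set_mult_def)

lemma set_inv_eq_image: "set_inv\<^bsub>G\<^esub> H = (\<lambda>h. inv\<^bsub>G\<^esub> h) ` H"
  by (auto simp: SET_INV_def)

lemma (in group) card_sym_diff_l_coset:
  assumes "A \<subseteq> carrier G" "x \<in> carrier G" "y \<in> carrier G"
  shows "card (sym_diff ((inv x \<otimes> y) <#\<^bsub>G\<^esub> A) A) = card (sym_diff (y <#\<^bsub>G\<^esub> A) (x <#\<^bsub>G\<^esub> A))"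
proof -
  have image: "(\<lambda>a. inv x \<otimes> a) ` (y <#\<^bsub>G\<^esub> A) = (inv x \<otimes> y) <#\<^bsub>G\<^esub> A"
    "(\<lambda>a. inv x \<otimes> a) ` (x <#\<^bsub>G\<^esub> A) = A"
    using assms by (simp_all add: lcos_m_assoc lcos_mult_one flip: l_coset_eq_image)
  have "inj_on (\<lambda>a. inv x \<otimes> a) ((y <#\<^bsub>G\<^esub> A) \<union> (x <#\<^bsub>G\<^esub> A))"
    using assms by (intro inj_on_subset[OF inj_on_cmult]) (auto simp: l_coset_subset_G)
  from card_sym_diff_image[OF this] show ?thesis
    unfolding image .
qed

lemma (in group) card_sym_diff_r_coset:
  assumes "A \<subseteq> carrier G" "x \<in> carrier G" "y \<in> carrier G"
  shows "card (sym_diff (A #> (x \<otimes> inv y)) A) = card (sym_diff (A #> x) (A #> y))"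
proof -
  have image: "(\<lambda>a. a \<otimes> inv y) ` (A #> x) = A #> (x \<otimes> inv y)" "(\<lambda>a. a \<otimes> inv y) ` (A #> y) = A"
    using assms by (simp_all add: coset_mult_assoc flip: r_coset_eq_image)
  have "inj_on (\<lambda>a. a \<otimes> inv y) ((A #> x) \<union> (A #> y))"
    using assms by (intro inj_on_subset[OF inj_on_multc]) (auto simp: r_coset_subset_G)
  from card_sym_diff_image[OF this] show ?thesis
    unfolding image .
qed

lemma (in group) cov_le_Stab_left:
  assumes "A \<subseteq> carrier G" "B \<subseteq> carrier G" "finite A" "finite B" "A \<noteq> {}" "B \<noteq> {}"
    and "0 < \<epsilon>" "\<epsilon> < 1" "\<epsilon> \<le> N / card (B <#> A)"
  shows "cov_le G B (Stab_left G N A \<inter> (set_inv B <#> B)) ((30 / \<epsilon>) ^ VC_left G B A)"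
proof -
  let ?U = "B <#> A"
  have U: "finite ?U" "?U \<noteq> {}" "?U \<subseteq> carrier G"
    using assms(1-6) by (auto simp: finite_set_mult setmult_subset_G intro: set_multI)
  have cosets: "x <#\<^bsub>G\<^esub> A \<subseteq> ?U" if "x \<in> B" for x
    using that by (auto simp: l_coset_def set_mult_def)
  have eps: "\<epsilon> * card ?U \<le> N"
    using assms(9) U(1,2) by (simp add: le_divide_eq card_gt_0_iff)
  have VC: "VC_at_most ((\<lambda>x. x <#\<^bsub>G\<^esub> A) ` B) ?U (VC_left G B A)"
    unfolding VC_left_def using U(3) assms(4) by (intro VC_at_most_VC) auto
  obtain F where F: "F \<subseteq> B" "card F \<le> (30 / \<epsilon>) ^ VC_left G B A"
    and net: "\<forall>b\<in>B. \<exists>x\<in>F. card (sym_diff (b <#\<^bsub>G\<^esub> A) (x <#\<^bsub>G\<^esub> A)) \<le> N"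
    using exists_small_net[where f = "\<lambda>x. x <#\<^bsub>G\<^esub> A", OF assms(4) U(1,2) cosets assms(7,8) eps VC] by blast
  have "B \<subseteq> F <#> (Stab_left G N A \<inter> (set_inv B <#> B))"
  proof
    fix b assume "b \<in> B"
    then obtain x where "x \<in> F" "card (sym_diff (b <#\<^bsub>G\<^esub> A) (x <#\<^bsub>G\<^esub> A)) \<le> N"
      using net by blast
    moreover have "x \<in> carrier G" "b \<in> carrier G"
      using \<open>x \<in> F\<close> \<open>F \<subseteq> B\<close> \<open>b \<in> B\<close> assms(2) by auto
    ultimately have "inv x \<otimes> b \<in> Stab_left G N A"
      using card_sym_diff_l_coset[OF assms(1)] by (simp add: Stab_left_def)
    moreover have "inv x \<otimes> b \<in> set_inv B <#> B"
      using \<open>x \<in> F\<close> \<open>F \<subseteq> B\<close> \<open>b \<in> B\<close> by (auto simp: set_inv_eq_image intro: set_multI)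
    ultimately have "x \<otimes> (inv x \<otimes> b) \<in> F <#> (Stab_left G N A \<inter> (set_inv B <#> B))"
      using \<open>x \<in> F\<close> by (intro set_multI) auto
    then show "b \<in> F <#> (Stab_left G N A \<inter> (set_inv B <#> B))"
      using \<open>x \<in> carrier G\<close> \<open>b \<in> carrier G\<close> by (simp add: m_assoc[symmetric])
  qed
  moreover have "finite F"
    using \<open>F \<subseteq> B\<close> assms(4) by (rule finite_subset)
  ultimately show ?thesis
    unfolding cov_le_def using \<open>F \<subseteq> B\<close> F(2) by (intro exI[of _ F]) simp
qed

lemma (in group) cov_le_Stab_right:
  assumes "A \<subseteq> carrier G" "B \<subseteq> carrier G" "finite A" "finite B" "A \<noteq> {}" "B \<noteq> {}"
    and "0 < \<epsilon>" "\<epsilon> < 1" "\<epsilon> \<le> N / card (A <#> B)"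
  shows "cov_le G (set_inv B) (Stab_right G N A \<inter> (B <#> set_inv B)) ((30 / \<epsilon>) ^ VC_right G B A)"
proof -
  let ?U = "A <#> B"
  have U: "finite ?U" "?U \<noteq> {}" "?U \<subseteq> carrier G"
    using assms(1-6) by (auto simp: finite_set_mult setmult_subset_G intro: set_multI)
  have cosets: "A #> x \<subseteq> ?U" if "x \<in> B" for x
    using that by (auto simp: r_coset_def set_mult_def)
  have eps: "\<epsilon> * card ?U \<le> N"
    using assms(9) U(1,2) by (simp add: le_divide_eq card_gt_0_iff)
  have VC: "VC_at_most ((\<lambda>x. A #> x) ` B) ?U (VC_right G B A)"
    unfolding VC_right_def using U(3) assms(4) by (intro VC_at_most_VC) auto
  obtain F where F: "F \<subseteq> B" "card F \<le> (30 / \<epsilon>) ^ VC_right G B A"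
    and net: "\<forall>b\<in>B. \<exists>x\<in>F. card (sym_diff (A #> b) (A #> x)) \<le> N"
    using exists_small_net[where f = "\<lambda>x. A #> x", OF assms(4) U(1,2) cosets assms(7,8) eps VC] by blast
  have "set_inv B \<subseteq> set_inv F <#> (Stab_right G N A \<inter> (B <#> set_inv B))"
  proof
    fix c assume "c \<in> set_inv B"
    then obtain b where "b \<in> B" "c = inv b"
      by (auto simp: set_inv_eq_image)
    then obtain x where "x \<in> F" "card (sym_diff (A #> b) (A #> x)) \<le> N"
      using net by blast
    moreover have "x \<in> carrier G" "b \<in> carrier G"
      using \<open>x \<in> F\<close> \<open>F \<subseteq> B\<close> \<open>b \<in> B\<close> assms(2) by auto
    ultimately have "x \<otimes> inv b \<in> Stab_right G N A"
      using card_sym_diff_r_coset[OF assms(1)] by (simp add: Stab_right_def Un_commute)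
    moreover have "x \<otimes> inv b \<in> B <#> set_inv B"
      using \<open>x \<in> F\<close> \<open>F \<subseteq> B\<close> \<open>b \<in> B\<close> by (auto simp: set_inv_eq_image intro: set_multI)
    moreover have "inv x \<in> set_inv F"
      using \<open>x \<in> F\<close> by (simp add: set_inv_eq_image)
    ultimately have "inv x \<otimes> (x \<otimes> inv b) \<in> set_inv F <#> (Stab_right G N A \<inter> (B <#> set_inv B))"
      by (intro set_multI) auto
    then show "c \<in> set_inv F <#> (Stab_right G N A \<inter> (B <#> set_inv B))"
      using \<open>x \<in> carrier G\<close> \<open>b \<in> carrier G\<close> \<open>c = inv b\<close> by (simp add: m_assoc[symmetric])
  qed
  moreover have "card (set_inv F) \<le> card F"
    unfolding set_inv_eq_image by (rule card_image_le) (use \<open>F \<subseteq> B\<close> assms(4) finite_subset in blast)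
  moreover have "set_inv F \<subseteq> set_inv B" "finite (set_inv F)"
    using \<open>F \<subseteq> B\<close> assms(4) finite_subset by (auto simp: set_inv_eq_image)
  ultimately show ?thesis
    unfolding cov_le_def using F(2) by (intro exI[of _ "set_inv F"]) simp
qed

theorem proposition2p10:
  fixes G :: "('a, 'b) monoid_scheme" and A B :: "'a set" and N \<epsilon> :: real
  assumes "group G"
    and "A \<subseteq> carrier G" and "B \<subseteq> carrier G"
    and "finite A" and "finite B" and "A \<noteq> {}" and "B \<noteq> {}"
    and "N > 0" and "0 < \<epsilon>" and "\<epsilon> < 1"
  shows "(\<epsilon> \<le> N / real (card (B <#>\<^bsub>G\<^esub> A)) \<longrightarrow>
           cov_le G B (Stab_left G N A \<inter> (set_inv\<^bsub>G\<^esub> B <#>\<^bsub>G\<^esub> B))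
             ((30 / \<epsilon>) ^ VC_left G B A))
       \<and> (\<epsilon> \<le> N / real (card (A <#>\<^bsub>G\<^esub> B)) \<longrightarrow>
           cov_le G (set_inv\<^bsub>G\<^esub> B) (Stab_right G N A \<inter> (B <#>\<^bsub>G\<^esub> set_inv\<^bsub>G\<^esub> B))
             ((30 / \<epsilon>) ^ VC_right G B A))"
  using group.cov_le_Stab_left[OF assms(1-7,9,10)] group.cov_le_Stab_right[OF assms(1-7,9,10)]
  by blast

end
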